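(* Let $\mathbf P\in\mathbb{R}^{n\times n}$ be symmetric positive definite and $\mathbf c\in\mathbb{R}^n$, and let $\ell_{\mathbf c,\mathbf P}:\mathcal{I}_{\mathbf P}\to\mathbb{R}$ be the function defined below. Then (1) $\ell_{\mathbf c,\mathbf P}$ is concave on $\mathcal{I}_{\mathbf P}$; and (2) $\ell_{\mathbf c,\mathbf P}(\beta)<0$ for all $\beta\in\mathcal{I}_{\mathbf P}$.
   Context: Let $\mathbf P=\mathbf V\mathbf D\mathbf V^\top$ be a spectral decomposition with $\mathbf V$ orthogonal and $\mathbf D$ diagonal with diagonal entries $\lambda_i=D_{ii}>0$, $i=1,\dots,n$. Let $\bar{\mathbf c}=\mathbf V^\top\mathbf c$ and $S(\bar{\mathbf c})=\{i\in\{1,\dots,n\}:\bar c_i\neq 0\}$. Let $\lambda_{\min}(\mathbf P)$ be the smallest eigenvalue of $\mathbf P$. Define the interval $\mathcal{I}_{\mathbf P}=(\lambda_{\min}(\mathbf P)^{-1},\infty)$ if there is $i\in S(\bar{\mathbf c})$ with $\lambda_i=\lambda_{\min}(\mathbf P)$, and $\mathcal{I}_{\mathbf P}=[\lambda_{\min}(\mathbf P)^{-1},\infty)$ otherwise. Define $$\ell_{\mathbf c,\mathbf P}(\beta)=-\beta-\sum_{i\in S(\bar{\mathbf c})}\bar c_i^2\,\frac{\lambda_i\beta}{\lambda_i\beta-1},\qquad \beta\in\mathcal{I}_{\mathbf P}.$$ *)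

theory Defs
  imports "HOL-Analysis.Analysis"
begin

definition lambda_min :: "real^'n^'n \<Rightarrow> real" where
  "lambda_min P = Min {l. \<exists>v. v \<noteq> 0 \<and> P *v v = l *\<^sub>R v}"

definition supp_cbar :: "real^'n^'n \<Rightarrow> real^'n \<Rightarrow> 'n set" where
  "supp_cbar V c = {i. (transpose V *v c) $ i \<noteq> 0}"

definition I_P :: "real^'n^'n \<Rightarrow> real^'n^'n \<Rightarrow> real^'n^'n \<Rightarrow> real^'n \<Rightarrow> real set" where
  "I_P P V D c = (if \<exists>i\<in>supp_cbar V c. D $ i $ i = lambda_min P
                  then {inverse (lambda_min P)<..} else {inverse (lambda_min P)..})"

definition ell :: "real^'n^'n \<Rightarrow> real^'n^'n \<Rightarrow> real^'n \<Rightarrow> real \<Rightarrow> real" where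
  "ell V D c \<beta> = - \<beta> - (\<Sum>i\<in>supp_cbar V c.
       ((transpose V *v c) $ i)\<^sup>2 * ((D $ i $ i * \<beta>) / (D $ i $ i * \<beta> - 1)))"

end

theory Submission
  imports Defs
begin

text \<open>Conjugating by the orthogonal matrix V turns P into the diagonal matrix D, so the
  eigenvalues of P are exactly the entries \<open>\<lambda>\<^sub>i = D\<^sub>i\<^sub>i\<close>; hence \<open>\<lambda>\<^sub>m\<^sub>i\<^sub>n(P) \<le> \<lambda>\<^sub>i\<close>, and
  every \<open>\<beta> \<in> \<I>\<^sub>P\<close> satisfies \<open>\<lambda>\<^sub>i \<beta> > 1\<close> for \<open>i \<in> S(c\<^sub>b\<^sub>a\<^sub>r)\<close> (strictly, because the interval
  is open exactly when some such \<open>\<lambda>\<^sub>i\<close> equals \<open>\<lambda>\<^sub>m\<^sub>i\<^sub>n(P)\<close>).  On \<open>\<lambda>\<beta> > 1\<close> the function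
  \<open>\<lambda>\<beta>/(\<lambda>\<beta> - 1) = 1 + 1/(\<lambda>\<beta> - 1)\<close> is positive and convex, so \<open>\<ell>\<close> is \<open>-\<beta>\<close> minus a
  nonnegative combination of convex functions: it is concave and below \<open>-\<beta> < 0\<close>.\<close>

lemma diagonal_matrix_vector_mult_nth:
  fixes D :: "'a::semiring_1^'n^'n"
  assumes "\<forall>i j. i \<noteq> j \<longrightarrow> D $ i $ j = 0"
  shows "(D *v w) $ i = D $ i $ i * w $ i"
proof -
  have "(D *v w) $ i = (\<Sum>j\<in>UNIV. D $ i $ j * w $ j)"
    by (simp add: matrix_vector_mult_def)
  also have "\<dots> = (\<Sum>j\<in>UNIV. if j = i then D $ i $ i * w $ i else 0)"
    by (rule sum.cong) (use assms in auto)
  finally show ?thesis by simp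
qed

lemma diagonal_matrix_eigenvalues:
  fixes D :: "real^'n^'n"
  assumes diag: "\<forall>i j. i \<noteq> j \<longrightarrow> D $ i $ j = 0"
  shows "{l. \<exists>w. w \<noteq> 0 \<and> D *v w = l *\<^sub>R w} = range (\<lambda>i. D $ i $ i)"
proof (intro equalityI subsetI)
  fix l assume "l \<in> {l. \<exists>w. w \<noteq> 0 \<and> D *v w = l *\<^sub>R w}"
  then obtain w where w: "w \<noteq> 0" "D *v w = l *\<^sub>R w" by blast
  then obtain i where i: "w $ i \<noteq> 0" by (auto simp: vec_eq_iff)
  have "D $ i $ i * w $ i = l * w $ i"
    using arg_cong[OF w(2), of "\<lambda>u. u $ i"] by (simp add: diagonal_matrix_vector_mult_nth[OF diag])
  with i have "l = D $ i $ i" by simp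
  then show "l \<in> range (\<lambda>i. D $ i $ i)" by blast
next
  fix l assume "l \<in> range (\<lambda>i. D $ i $ i)"
  then obtain i where l: "l = D $ i $ i" by blast
  have "D *v axis i 1 = l *\<^sub>R axis i 1"
    by (simp add: vec_eq_iff diagonal_matrix_vector_mult_nth[OF diag] axis_def l)
  moreover have "axis i (1::real) \<noteq> 0" by (simp add: axis_eq_0_iff)
  ultimately show "l \<in> {l. \<exists>w. w \<noteq> 0 \<and> D *v w = l *\<^sub>R w}" by blast
qed

lemma orthogonal_conjugate_eigenvalues:
  fixes V A :: "real^'n^'n"
  assumes "orthogonal_matrix V"
  shows "{l. \<exists>v. v \<noteq> 0 \<and> (V ** A ** transpose V) *v v = l *\<^sub>R v}
       = {l. \<exists>w. w \<noteq> 0 \<and> A *v w = l *\<^sub>R w}"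
proof -
  have VtV: "transpose V ** V = mat 1" and VVt: "V ** transpose V = mat 1"
    using assms by (auto simp: orthogonal_matrix_def)
  have V_inv: "V *v (transpose V *v v) = v" "transpose V *v (V *v v) = v" for v :: "real^'n"
    by (simp_all only: matrix_vector_mul_assoc VtV VVt matrix_vector_mul_lid)
  have conj: "(V ** A ** transpose V) *v v = V *v (A *v (transpose V *v v))" for v
    by (simp only: matrix_vector_mul_assoc matrix_mul_assoc)
  have eig: "v \<noteq> 0 \<and> (V ** A ** transpose V) *v v = l *\<^sub>R v
        \<longleftrightarrow> transpose V *v v \<noteq> 0 \<and> A *v (transpose V *v v) = l *\<^sub>R (transpose V *v v)" for v l
    by (metis V_inv conj matrix_vector_mult_scaleR matrix_vector_mult_0_right)
  have surj: "(\<exists>v. Q (transpose V *v v)) \<longleftrightarrow> (\<exists>w. Q w)" for Q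
    by (metis V_inv(2))
  show ?thesis
  proof (rule Collect_cong)
    fix l
    have "(\<exists>v. v \<noteq> 0 \<and> (V ** A ** transpose V) *v v = l *\<^sub>R v)
        \<longleftrightarrow> (\<exists>v. transpose V *v v \<noteq> 0 \<and> A *v (transpose V *v v) = l *\<^sub>R (transpose V *v v))"
      by (simp only: eig)
    also have "\<dots> \<longleftrightarrow> (\<exists>w. w \<noteq> 0 \<and> A *v w = l *\<^sub>R w)"
      by (rule surj)
    finally show "(\<exists>v. v \<noteq> 0 \<and> (V ** A ** transpose V) *v v = l *\<^sub>R v)
        \<longleftrightarrow> (\<exists>w. w \<noteq> 0 \<and> A *v w = l *\<^sub>R w)" .
  qed
qed

lemma lambda_min_orthogonal_diagonalization:
  fixes V D :: "real^'n^'n"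
  assumes "orthogonal_matrix V" and "\<forall>i j. i \<noteq> j \<longrightarrow> D $ i $ j = 0"
  shows "lambda_min (V ** D ** transpose V) = (MIN i. D $ i $ i)"
  unfolding lambda_min_def orthogonal_conjugate_eigenvalues[OF assms(1)]
    diagonal_matrix_eigenvalues[OF assms(2)] ..

lemma convex_on_sum_fun:
  fixes g :: "'i \<Rightarrow> 'a::real_vector \<Rightarrow> real"
  assumes "finite F" "convex S" "\<And>i. i \<in> F \<Longrightarrow> convex_on S (g i)"
  shows "convex_on S (\<lambda>x. \<Sum>i\<in>F. g i x)"
  using assms by (induction F rule: finite_induct) (auto simp: convex_on_const)

lemma convex_on_scaled_ratio:
  fixes l :: real
  assumes l: "l > 0"
  shows "convex_on {inverse l<..} (\<lambda>b. (l * b) / (l * b - 1))"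
proof (rule convex_on_realI[where f' = "\<lambda>b. - l / (l * b - 1)\<^sup>2"])
  fix x assume "x \<in> {inverse l<..}"
  then have "l * x - 1 \<noteq> 0" using l by (simp add: field_simps)
  then show "((\<lambda>b. (l * b) / (l * b - 1)) has_real_derivative - l / (l * x - 1)\<^sup>2) (at x)"
    by (auto intro!: derivative_eq_intros simp: field_simps power2_eq_square)
next
  fix x y assume "x \<in> {inverse l<..}" and "x \<le> y"
  then have "0 < l * x - 1" "l * x - 1 \<le> l * y - 1"
    using l by (simp_all add: field_simps)
  then have "0 < (l * x - 1)\<^sup>2" "(l * x - 1)\<^sup>2 \<le> (l * y - 1)\<^sup>2"
    by (auto intro: power_mono)
  then have "l / (l * y - 1)\<^sup>2 \<le> l / (l * x - 1)\<^sup>2"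
    using l by (intro divide_left_mono mult_pos_pos) auto
  then show "- l / (l * x - 1)\<^sup>2 \<le> - l / (l * y - 1)\<^sup>2" by simp
qed simp

lemma I_P_subset_greaterThan_inverse:
  assumes "\<forall>j. lambda_min P \<le> D $ j $ j" "lambda_min P > 0" "i \<in> supp_cbar V c"
  shows "I_P P V D c \<subseteq> {inverse (D $ i $ i)<..}"
proof (cases "D $ i $ i = lambda_min P")
  case True
  with assms(3) show ?thesis by (auto simp: I_P_def)
next
  case False
  with assms have "lambda_min P < D $ i $ i"
    by (simp add: order_less_le)
  with assms(2) have "inverse (D $ i $ i) < inverse (lambda_min P)"
    by (intro less_imp_inverse_less)
  then show ?thesis by (auto simp: I_P_def)
qed

lemma I_P_subset_greaterThan_0:
  assumes "lambda_min P > 0"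
  shows "I_P P V D c \<subseteq> {0<..}"
  using assms by (auto simp: I_P_def intro: less_le_trans[of 0 "inverse (lambda_min P)"])

lemma concave_on_ell:
  assumes "convex S" and "\<And>i. i \<in> supp_cbar V c \<Longrightarrow> 0 < D $ i $ i \<and> S \<subseteq> {inverse (D $ i $ i)<..}"
  shows "concave_on S (ell V D c)"
proof -
  have "convex_on S (\<lambda>\<beta>. \<beta> + (\<Sum>i\<in>supp_cbar V c.
          ((transpose V *v c) $ i)\<^sup>2 * ((D $ i $ i * \<beta>) / (D $ i $ i * \<beta> - 1))))"
    using assms
    by (intro convex_on_add convex_on_sum_fun convex_on_cmul convex_on_subset[OF convex_on_scaled_ratio])
      (auto simp: convex_on_ident)
  then show ?thesis
    by (simp add: concave_on_def ell_def add.commute)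
qed

lemma ell_neg:
  assumes "\<beta> > 0" and "\<And>i. i \<in> supp_cbar V c \<Longrightarrow> 0 < D $ i $ i \<and> inverse (D $ i $ i) < \<beta>"
  shows "ell V D c \<beta> < 0"
proof -
  have "0 \<le> (D $ i $ i * \<beta>) / (D $ i $ i * \<beta> - 1)" if "i \<in> supp_cbar V c" for i
  proof -
    have "1 < D $ i $ i * \<beta>"
      using assms(2)[OF that] by (auto simp: inverse_eq_divide divide_less_eq mult.commute)
    then show ?thesis by simp
  qed
  then have "0 \<le> (\<Sum>i\<in>supp_cbar V c.
          ((transpose V *v c) $ i)\<^sup>2 * ((D $ i $ i * \<beta>) / (D $ i $ i * \<beta> - 1)))"
    by (intro sum_nonneg mult_nonneg_nonneg) auto
  with assms(1) show ?thesis by (simp add: ell_def)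
qed

theorem lemma2:
  fixes P V D :: "real^'n^'n" and c :: "real^'n"
  assumes sym: "transpose P = P"
    and posdef: "\<forall>x. x \<noteq> 0 \<longrightarrow> x \<bullet> (P *v x) > 0"
    and orth: "orthogonal_matrix V"
    and diag: "\<forall>i j. i \<noteq> j \<longrightarrow> D $ i $ j = 0"
    and decomp: "P = V ** D ** transpose V"
    and pos: "\<forall>i. D $ i $ i > 0"
  shows "concave_on (I_P P V D c) (ell V D c)
         \<and> (\<forall>\<beta>\<in>I_P P V D c. ell V D c \<beta> < 0)"
proof -
  have lambda_min: "lambda_min P = (MIN i. D $ i $ i)"
    using lambda_min_orthogonal_diagonalization[OF orth diag] decomp by simp
  have lambda_min_le: "\<forall>j. lambda_min P \<le> D $ j $ j"
    unfolding lambda_min by simp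
  have lambda_min_pos: "lambda_min P > 0"
    unfolding lambda_min using pos by simp
  have I_P_sub: "I_P P V D c \<subseteq> {inverse (D $ i $ i)<..}" if "i \<in> supp_cbar V c" for i
    using I_P_subset_greaterThan_inverse[OF lambda_min_le lambda_min_pos that] .
  have I_P_pos: "I_P P V D c \<subseteq> {0<..}"
    using I_P_subset_greaterThan_0[OF lambda_min_pos] .
  have "concave_on (I_P P V D c) (ell V D c)"
    using pos I_P_sub by (intro concave_on_ell) (auto simp: I_P_def)
  moreover have "ell V D c \<beta> < 0" if "\<beta> \<in> I_P P V D c" for \<beta>
    using that pos I_P_sub I_P_pos by (intro ell_neg) auto
  ultimately show ?thesis by blast
qed

end
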